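(* Let $\kappa\in(0,1)$, $\tau>0$, $\Omega\in\mathbb{R}\setminus\{0\}$ and $W>0$ be independent parameters, and let $\Psi(P)=1$ if $|P|<W$ and $\Psi(P)=0$ otherwise. Consider the eigenvalue problem $$\tau\lambda\,Z(P)=\tau\Omega\,Z'(P)-Z(P)+\kappa^{-1}\Psi(P)Z(P)-\kappa^{-1}\int_{-\infty}^{\infty}\Psi(Q)Z(Q)\,dQ,\qquad P\in\mathbb{R},$$ for $\lambda\in\mathbb{C}$ and $Z:\mathbb{R}\to\mathbb{C}$ continuous, growing at most linearly, and satisfying the equation on $\mathbb{R}\setminus\{-W,W\}$. Call $\lambda$ an eigenvalue if there is a nontrivial such $Z$. Then: (i) A complex number $\lambda$ with $\operatorname{Re}(\tau\lambda)<-1$ is an eigenvalue if and only if $$\exp\Big(\frac{\kappa\tau\lambda+\kappa-1}{\kappa\tau|\Omega|}\,2W\Big)-1=\frac{(\kappa\tau\lambda+\kappa)(\kappa\tau\lambda+\kappa-1)(\kappa\tau\lambda+\kappa-1+2W)}{\kappa\tau|\Omega|}.$$ (ii) For every $\lambda\in\mathbb{C}$ with $\operatorname{Re}(\tau\lambda)=-1$ there exists a corresponding eigenfunction. (iii) A complex number $\lambda$ with $\operatorname{Re}(\tau\lambda)>-1$ is an eigenvalue if and only if both $$1-\exp\Big(-\frac{\kappa\tau\lambda+\kappa-1}{\kappa\tau|\Omega|}\,2W\Big)=\frac{(\kappa\tau\lambda+\kappa)(\kappa\tau\lambda+\kappa-1)(\kappa\tau\lambda+\kappa-1+2W)}{\kappa\tau|\Omega|}$$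 and $\tau\lambda\neq(1-\kappa)/\kappa$ hold. Moreover, all eigenvalues in the cases (i) and (iii) are simple and have bounded eigenfunctions.
   Context: This eigenvalue problem is the linearization, in a comoving frame $P=p-\tfrac12(\Xi_-+\Xi_+)-\Omega t$ with $z(t,p)=e^{\lambda t}Z(P)$, of the mean-field particle dynamics $\tau\partial_t x=\sigma(t)+\delta(p-\tfrac12)-H'(x)$ (with trilinear $H'$ having spinodal region $[-\kappa,\kappa]$) around a traveling wave of speed $\Omega$ whose spinodal stripe has half width $W$. In this statement, however, $W$ is not required to satisfy any traveling-wave relation. The set in (ii) is called the continuous spectrum. *)

theory Defs
  imports "HOL-Analysis.Analysis"
begin

definition Psi :: "real \<Rightarrow> real \<Rightarrow> real" where
  "Psi W P = (if \<bar>P\<bar> < W then 1 else 0)"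

definition is_eigenfunction ::
  "real \<Rightarrow> real \<Rightarrow> real \<Rightarrow> real \<Rightarrow> complex \<Rightarrow> (real \<Rightarrow> complex) \<Rightarrow> bool" where
  "is_eigenfunction \<kappa> \<tau> \<Omega> W lam Z \<longleftrightarrow>
     continuous_on UNIV Z \<and>
     (\<exists>C. \<forall>P. norm (Z P) \<le> C * (1 + \<bar>P\<bar>)) \<and>
     Z \<noteq> (\<lambda>_. 0) \<and>
     (\<forall>P. P \<noteq> -W \<and> P \<noteq> W \<longrightarrow>
        (\<exists>Z'. (Z has_vector_derivative Z') (at P) \<and>
           complex_of_real \<tau> * lam * Z P =
             complex_of_real (\<tau> * \<Omega>) * Z' - Z P
             + complex_of_real (Psi W P / \<kappa>) * Z P
             - complex_of_real (1 / \<kappa>) *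
                 integral UNIV (\<lambda>Q. complex_of_real (Psi W Q) * Z Q)))"

definition is_eigenvalue :: "real \<Rightarrow> real \<Rightarrow> real \<Rightarrow> real \<Rightarrow> complex \<Rightarrow> bool" where
  "is_eigenvalue \<kappa> \<tau> \<Omega> W lam \<longleftrightarrow> (\<exists>Z. is_eigenfunction \<kappa> \<tau> \<Omega> W lam Z)"

end

theory Submission
  imports Defs "HOL-Real_Asymp.Real_Asymp"
begin

text \<open>
  Away from \<open>\<plusminus>W\<close> the eigen-equation is the affine ODE \<open>Z' = r Z + I / \<sigma>\<close>, where \<open>I\<close> is the
  integral of \<open>Z\<close> over the stripe, \<open>\<sigma> = \<kappa>\<tau>\<Omega>\<close>, and the rate \<open>r\<close> is \<open>\<mu> / (\<tau>\<Omega>)\<close> outside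
  the stripe and \<open>\<nu> / \<sigma>\<close> inside, with \<open>\<mu> = \<tau>\<lambda> + 1\<close> and \<open>\<nu> = \<kappa>\<mu> - 1\<close>. So \<open>Z\<close> is
  pieced together from explicit affine flows and is determined by \<open>I\<close> and one of its values.

  If \<open>Re \<mu> \<noteq> 0\<close>, the outer flow grows exponentially on one side of the stripe, and linear
  growth forces \<open>Z\<close> to sit at the equilibrium \<open>-I / (\<kappa>\<mu>)\<close> there. Hence \<open>Z = I \<cdot> \<Phi>\<close> for one
  fixed bounded profile \<open>\<Phi>\<close>, and \<open>I \<noteq> 0\<close>: eigenfunctions are simple and bounded, and \<open>\<lambda>\<close> is an
  eigenvalue iff the stripe integral of \<open>\<Phi>\<close> is 1, which is the explicit exponential equation
  (it fails when \<open>\<nu> = 0\<close>). If \<open>Re \<mu> = 0\<close>, the outer flows grow at most linearly, and choosing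
  \<open>I\<close> and the inner initial value to satisfy the integral condition gives an eigenfunction for
  every such \<open>\<lambda>\<close>. Negative drift \<open>\<Omega>\<close> reduces to positive drift by the reflection \<open>P \<mapsto> -P\<close>.
\<close>

section \<open>Affine flows\<close>

lemma has_vector_derivative_exp_scaled:
  fixes \<alpha> :: complex
  shows "((\<lambda>t. exp (\<alpha> * of_real (t - c))) has_vector_derivative \<alpha> * exp (\<alpha> * of_real (t - c)))
           (at t within S)"
proof -
  have "((\<lambda>z. exp (\<alpha> * (z - of_real c))) has_field_derivative \<alpha> * exp (\<alpha> * of_real (t - c)))
          (at (of_real t))"
    by (auto intro!: derivative_eq_intros)
  from has_vector_derivative_real_field[OF this] show ?thesis
    by simp
qed

definition affine_flow :: "complex \<Rightarrow> complex \<Rightarrow> complex \<Rightarrow> real \<Rightarrow> complex" where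
  "affine_flow \<alpha> \<beta> v t =
     (if \<alpha> = 0 then v + \<beta> * of_real t else (v + \<beta> / \<alpha>) * exp (\<alpha> * of_real t) - \<beta> / \<alpha>)"

lemma affine_flow_0 [simp]: "affine_flow \<alpha> \<beta> v 0 = v"
  by (simp add: affine_flow_def)

lemma affine_flow_scale: "affine_flow \<alpha> (x * \<beta>) (x * v) t = x * affine_flow \<alpha> \<beta> v t"
  by (simp add: affine_flow_def algebra_simps)

lemma affine_flow_equilibrium: "\<alpha> \<noteq> 0 \<Longrightarrow> affine_flow \<alpha> \<beta> (- \<beta> / \<alpha>) t = - \<beta> / \<alpha>"
  by (simp add: affine_flow_def)

lemma affine_flow_reverse: "affine_flow \<alpha> \<beta> v (- t) = affine_flow (- \<alpha>) (- \<beta>) v t"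
  by (simp add: affine_flow_def)

lemma has_vector_derivative_affine_flow:
  "((\<lambda>t. affine_flow \<alpha> \<beta> v (t - c)) has_vector_derivative \<alpha> * affine_flow \<alpha> \<beta> v (t - c) + \<beta>)
     (at t within S)"
proof (cases "\<alpha> = 0")
  case True
  have "((\<lambda>t. v + \<beta> * of_real (t - c)) has_vector_derivative \<beta>) (at t within S)"
    using has_vector_derivative_of_real[of "\<lambda>t. t - c" 1 "at t within S"]
    by (auto intro!: derivative_eq_intros)
  with True show ?thesis
    by (simp add: affine_flow_def)
next
  case False
  have "((\<lambda>t. (v + \<beta> / \<alpha>) * exp (\<alpha> * of_real (t - c)) - \<beta> / \<alpha>) has_vector_derivative
          (v + \<beta> / \<alpha>) * (\<alpha> * exp (\<alpha> * of_real (t - c))) - 0) (at t within S)"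
    by (intro has_vector_derivative_diff has_vector_derivative_mult_right
        has_vector_derivative_exp_scaled has_vector_derivative_const)
  with False show ?thesis
    by (simp add: affine_flow_def algebra_simps)
qed

lemma continuous_on_affine_flow: "continuous_on S (\<lambda>t. affine_flow \<alpha> \<beta> v (t - c))"
  using has_vector_derivative_affine_flow[THEN has_vector_derivative_continuous]
  by (blast intro: continuous_at_imp_continuous_on)

lemma affine_flow_unique:
  fixes Z :: "real \<Rightarrow> complex"
  assumes "convex S" "finite K" "continuous_on S Z" "c \<in> S" "P \<in> S"
    and Z': "\<And>t. t \<in> S - K \<Longrightarrow> (Z has_vector_derivative \<alpha> * Z t + \<beta>) (at t)"
  shows "Z P = affine_flow \<alpha> \<beta> (Z c) (P - c)"
proof -
  define F where "F t = affine_flow \<alpha> \<beta> (Z c) (t - c)" for t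
  define h where "h t = (Z t - F t) * exp (- \<alpha> * of_real (t - c))" for t
  have "h P = h c"
  proof (rule has_derivative_zero_unique_strong_convex[OF assms(1,2) _ assms(4) refl _ assms(5)])
    show "continuous_on S h"
      unfolding h_def F_def by (intro continuous_intros assms(3) continuous_on_affine_flow)
    fix t assume t: "t \<in> S - K"
    have "(h has_vector_derivative
            (Z t - F t) * (- \<alpha> * exp (- \<alpha> * of_real (t - c)))
            + (\<alpha> * Z t + \<beta> - (\<alpha> * F t + \<beta>)) * exp (- \<alpha> * of_real (t - c))) (at t within S)"
      unfolding h_def F_def
      by (intro has_vector_derivative_mult has_vector_derivative_diff has_vector_derivative_exp_scaled
          has_vector_derivative_at_within[OF Z'[OF t]] has_vector_derivative_affine_flow)
    then show "(h has_derivative (\<lambda>_. 0)) (at t within S)"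
      by (simp add: has_vector_derivative_def algebra_simps)
  qed
  then show ?thesis
    by (simp add: h_def F_def)
qed

lemma norm_affine_flow_le:
  assumes "\<alpha> \<noteq> 0" and "Re \<alpha> * t \<le> 0 \<or> v = - \<beta> / \<alpha>"
  shows "norm (affine_flow \<alpha> \<beta> v t) \<le> norm v + 2 * norm (\<beta> / \<alpha>)"
  using assms(2)
proof
  assume "Re \<alpha> * t \<le> 0"
  then have "norm ((v + \<beta> / \<alpha>) * exp (\<alpha> * of_real t)) \<le> norm (v + \<beta> / \<alpha>)"
    by (simp add: norm_mult mult_left_le)
  also have "\<dots> \<le> norm v + norm (\<beta> / \<alpha>)"
    by (rule norm_triangle_ineq)
  finally show ?thesis
    using assms(1) norm_triangle_ineq4[of "(v + \<beta> / \<alpha>) * exp (\<alpha> * of_real t)" "\<beta> / \<alpha>"]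
    by (simp add: affine_flow_def)
qed (use assms(1) affine_flow_equilibrium in auto)

lemma norm_affine_flow_le_linear:
  assumes "Re \<alpha> * t \<le> 0 \<or> v = - \<beta> / \<alpha>"
  shows "norm (affine_flow \<alpha> \<beta> v t) \<le> (norm v + 2 * norm (\<beta> / \<alpha>) + norm \<beta>) * (1 + \<bar>t\<bar>)"
proof (cases "\<alpha> = 0")
  case True
  have "norm (v + \<beta> * of_real t) \<le> norm v + norm \<beta> * \<bar>t\<bar>"
    by (metis norm_mult norm_of_real norm_triangle_ineq)
  also have "\<dots> \<le> (norm v + norm \<beta>) * (1 + \<bar>t\<bar>)"
    by (simp add: algebra_simps)
  finally show ?thesis
    using True by (simp add: affine_flow_def)
next
  case False
  have "norm (affine_flow \<alpha> \<beta> v t) \<le> (norm v + 2 * norm (\<beta> / \<alpha>)) * 1"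
    using norm_affine_flow_le[OF False assms] by simp
  also have "\<dots> \<le> (norm v + 2 * norm (\<beta> / \<alpha>) + norm \<beta>) * (1 + \<bar>t\<bar>)"
    by (intro mult_mono) auto
  finally show ?thesis .
qed

lemma affine_flow_growth_at_top_imp_equilibrium:
  assumes "0 < Re \<alpha>" and growth: "\<And>t. 0 \<le> t \<Longrightarrow> norm (affine_flow \<alpha> \<beta> v t) \<le> A + B * \<bar>t\<bar>"
  shows "v = - \<beta> / \<alpha>"
proof (rule ccontr)
  assume "v \<noteq> - \<beta> / \<alpha>"
  define D where "D = norm (v + \<beta> / \<alpha>)"
  have D_pos: "0 < D"
    using \<open>v \<noteq> - \<beta> / \<alpha>\<close> by (auto simp: D_def add_eq_0_iff)
  have "\<forall>\<^sub>F t in at_top. exp (Re \<alpha> * t) > (A + norm (\<beta> / \<alpha>)) / D + (B / D) * t"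
    using assms(1) by real_asymp
  moreover have "\<forall>\<^sub>F t in at_top. 0 \<le> (t :: real)"
    by (rule eventually_ge_at_top)
  ultimately have "\<forall>\<^sub>F t in at_top. exp (Re \<alpha> * t) > (A + norm (\<beta> / \<alpha>)) / D + (B / D) * t \<and> 0 \<le> t"
    by (rule eventually_conj)
  then obtain t where t: "exp (Re \<alpha> * t) > (A + norm (\<beta> / \<alpha>)) / D + (B / D) * t" "0 \<le> t"
    unfolding eventually_at_top_linorder by blast
  have "D * exp (Re \<alpha> * t) = norm ((v + \<beta> / \<alpha>) * exp (\<alpha> * of_real t))"
    by (simp add: D_def norm_mult)
  also have "\<dots> \<le> norm (affine_flow \<alpha> \<beta> v t) + norm (\<beta> / \<alpha>)"
    using assms(1) norm_triangle_ineq2[of "(v + \<beta> / \<alpha>) * exp (\<alpha> * of_real t)" "\<beta> / \<alpha>"]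
    by (auto simp: affine_flow_def)
  also have "\<dots> \<le> A + B * t + norm (\<beta> / \<alpha>)"
    using growth[OF t(2)] t(2) by simp
  also have "\<dots> = D * ((A + norm (\<beta> / \<alpha>)) / D + (B / D) * t)"
    using D_pos by (simp add: field_simps)
  also have "\<dots> < D * exp (Re \<alpha> * t)"
    using mult_strict_left_mono[OF t(1) D_pos] .
  finally show False
    by simp
qed

lemma affine_flow_growth_at_bot_imp_equilibrium:
  assumes "Re \<alpha> < 0" and "\<And>t. t \<le> 0 \<Longrightarrow> norm (affine_flow \<alpha> \<beta> v t) \<le> A + B * \<bar>t\<bar>"
  shows "v = - \<beta> / \<alpha>"
proof -
  have "v = - (- \<beta>) / (- \<alpha>)"
  proof (rule affine_flow_growth_at_top_imp_equilibrium)
    fix t :: real assume "0 \<le> t"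
    then show "norm (affine_flow (- \<alpha>) (- \<beta>) v t) \<le> A + B * \<bar>t\<bar>"
      using assms(2)[of "- t"] by (simp add: affine_flow_reverse)
  qed (use assms(1) in simp)
  then show ?thesis
    by simp
qed

lemma has_integral_affine_flow:
  assumes "x \<le> y"
  shows "((\<lambda>t. affine_flow \<alpha> \<beta> v (t - c)) has_integral
           (if \<alpha> = 0 then v * of_real (y - x) + \<beta> * of_real (((y - c)\<^sup>2 - (x - c)\<^sup>2) / 2)
            else (v + \<beta> / \<alpha>) * (exp (\<alpha> * of_real (y - c)) - exp (\<alpha> * of_real (x - c))) / \<alpha>
                 - \<beta> / \<alpha> * of_real (y - x))) {x..y}"
proof (cases "\<alpha> = 0")
  case True
  define G where "G t = v * of_real (t - c) + \<beta> * of_real ((t - c)\<^sup>2 / 2)" for t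
  have "(G has_vector_derivative affine_flow \<alpha> \<beta> v (t - c)) (at t within {x..y})" for t
  proof -
    have "((\<lambda>t. of_real (t - c) :: complex) has_vector_derivative of_real 1) (at t within {x..y})"
      "((\<lambda>t. of_real ((t - c)\<^sup>2 / 2) :: complex) has_vector_derivative of_real (t - c))
         (at t within {x..y})"
      by (intro has_vector_derivative_of_real; auto intro!: derivative_eq_intros)+
    then have "(G has_vector_derivative v * of_real 1 + \<beta> * of_real (t - c)) (at t within {x..y})"
      unfolding G_def by (intro has_vector_derivative_add has_vector_derivative_mult_right)
    with True show ?thesis
      by (simp add: affine_flow_def)
  qed
  moreover have "G y - G x = v * of_real (y - x) + \<beta> * of_real (((y - c)\<^sup>2 - (x - c)\<^sup>2) / 2)"
    by (simp add: G_def field_simps)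
  ultimately show ?thesis
    using fundamental_theorem_of_calculus[OF assms, of G] True by auto
next
  case False
  define G where "G t = (v + \<beta> / \<alpha>) * exp (\<alpha> * of_real (t - c)) / \<alpha> - \<beta> / \<alpha> * of_real (t - c)" for t
  have "(G has_vector_derivative affine_flow \<alpha> \<beta> v (t - c)) (at t within {x..y})" for t
  proof -
    have "(G has_vector_derivative
            (v + \<beta> / \<alpha>) * (\<alpha> * exp (\<alpha> * of_real (t - c))) / \<alpha> - \<beta> / \<alpha> * 1) (at t within {x..y})"
      unfolding G_def using has_vector_derivative_of_real[of "\<lambda>t. t - c" 1 "at t within {x..y}"]
      by (intro has_vector_derivative_diff has_vector_derivative_divide has_vector_derivative_mult_right
          has_vector_derivative_exp_scaled) (auto intro!: derivative_eq_intros)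
    with False show ?thesis
      by (simp add: affine_flow_def)
  qed
  from fundamental_theorem_of_calculus[OF assms this] show ?thesis
    using False by (simp add: G_def algebra_simps diff_divide_distrib)
qed

section \<open>Growth and integrals on the stripe\<close>

lemma has_integral_Psi_mult:
  fixes Z :: "real \<Rightarrow> complex"
  assumes "(Z has_integral J) {-W..W}"
  shows "((\<lambda>Q. of_real (Psi W Q) * Z Q) has_integral J) UNIV"
proof -
  have "((\<lambda>Q. if Q \<in> {-W<..<W} then Z Q else 0) has_integral J) UNIV"
    using assms has_integral_Icc_iff_Ioo has_integral_restrict_UNIV by blast
  moreover have "(\<lambda>Q. if Q \<in> {-W<..<W} then Z Q else 0) = (\<lambda>Q. of_real (Psi W Q) * Z Q)"
    by (auto simp: Psi_def fun_eq_iff abs_less_iff)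
  ultimately show ?thesis
    by simp
qed

lemma bounded_norm_on_Icc:
  fixes g :: "real \<Rightarrow> complex"
  assumes "continuous_on {-W..W} g"
  obtains M where "\<And>P. \<bar>P\<bar> \<le> W \<Longrightarrow> norm (g P) \<le> M"
proof -
  have "bounded (g ` {-W..W})"
    by (intro compact_imp_bounded compact_continuous_image assms compact_Icc)
  then obtain M where M: "\<And>x. x \<in> g ` {-W..W} \<Longrightarrow> norm x \<le> M"
    unfolding bounded_iff by blast
  show ?thesis
  proof (rule that)
    fix P :: real assume "\<bar>P\<bar> \<le> W"
    then show "norm (g P) \<le> M"
      by (intro M imageI) auto
  qed
qed

lemma linear_growth_if_outside:
  fixes g :: "real \<Rightarrow> complex"
  assumes "continuous_on {-W..W} g" and outside: "\<And>P. W \<le> \<bar>P\<bar> \<Longrightarrow> norm (g P) \<le> A + B * \<bar>P\<bar>"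
  shows "\<exists>C. \<forall>P. norm (g P) \<le> C * (1 + \<bar>P\<bar>)"
proof -
  obtain M where M: "\<And>P. \<bar>P\<bar> \<le> W \<Longrightarrow> norm (g P) \<le> M"
    using bounded_norm_on_Icc[OF assms(1)] by blast
  define C where "C = \<bar>M\<bar> + \<bar>A\<bar> + \<bar>B\<bar>"
  have "norm (g P) \<le> C + C * \<bar>P\<bar>" for P
  proof (cases "\<bar>P\<bar> \<le> W")
    case True
    have "M \<le> C" "0 \<le> C * \<bar>P\<bar>"
      by (simp_all add: C_def)
    then show ?thesis
      using M[OF True] by linarith
  next
    case False
    have "A \<le> C" "B * \<bar>P\<bar> \<le> C * \<bar>P\<bar>"
      by (auto simp: C_def intro!: mult_right_mono)
    then show ?thesis
      using outside[of P] False by linarith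
  qed
  then show ?thesis
    by (auto simp: algebra_simps)
qed

lemma bounded_range_if_outside:
  fixes g :: "real \<Rightarrow> complex"
  assumes "continuous_on {-W..W} g" and "\<And>P. W \<le> \<bar>P\<bar> \<Longrightarrow> norm (g P) \<le> A"
  shows "bounded (range g)"
proof -
  obtain M where "\<And>P. \<bar>P\<bar> \<le> W \<Longrightarrow> norm (g P) \<le> M"
    using bounded_norm_on_Icc[OF assms(1)] by blast
  then have "norm (g P) \<le> max M A" for P
    using assms(2)[of P] by (cases "\<bar>P\<bar> \<le> W") (auto simp: le_max_iff_disj)
  then show ?thesis
    unfolding bounded_iff by blast
qed

lemma has_integral_nonzero_imp_nonzero:
  assumes "(f has_integral I) S" and "I \<noteq> 0"
  shows "\<exists>x\<in>S. f x \<noteq> 0"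
  using assms has_integral_is_0[of S f] has_integral_unique by blast

lemma bounded_imp_linear_growth:
  fixes g :: "real \<Rightarrow> complex"
  assumes "bounded (range g)"
  shows "\<exists>C. \<forall>P. norm (g P) \<le> C * (1 + \<bar>P\<bar>)"
proof -
  obtain B where B: "\<And>P. norm (g P) \<le> B"
    using assms unfolding bounded_iff by blast
  have "norm (g P) \<le> \<bar>B\<bar> * (1 + \<bar>P\<bar>)" for P
  proof -
    have "B \<le> \<bar>B\<bar> * 1"
      by simp
    also have "\<dots> \<le> \<bar>B\<bar> * (1 + \<bar>P\<bar>)"
      by (intro mult_left_mono) auto
    finally show ?thesis
      using B[of P] by linarith
  qed
  then show ?thesis
    by blast
qed

section \<open>Reversing the drift\<close>

lemma integral_Psi_mult_reflect:
  fixes Z :: "real \<Rightarrow> complex"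
  assumes "continuous_on UNIV Z"
  shows "integral UNIV (\<lambda>Q. of_real (Psi W Q) * Z (- Q)) = integral UNIV (\<lambda>Q. of_real (Psi W Q) * Z Q)"
proof -
  define J where "J = integral {-W..W} Z"
  have J: "(Z has_integral J) {-W..W}"
    unfolding J_def
    by (intro integrable_integral integrable_continuous_interval continuous_on_subset[OF assms]) auto
  then have "((\<lambda>P. Z (- P)) has_integral J) {-W..W}"
    using has_integral_reflect_real[where f = Z and a = "-W" and b = W] by simp
  then show ?thesis
    using integral_unique[OF has_integral_Psi_mult[OF J]] integral_unique[OF has_integral_Psi_mult]
    by simp
qed

lemma is_eigenfunction_reflect:
  assumes Z: "is_eigenfunction \<kappa> \<tau> \<Omega> W lam Z"
  shows "is_eigenfunction \<kappa> \<tau> (- \<Omega>) W lam (\<lambda>P. Z (- P))"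
proof -
  have cont: "continuous_on UNIV Z" and growth: "\<exists>C. \<forall>P. norm (Z P) \<le> C * (1 + \<bar>P\<bar>)"
    and nonzero: "Z \<noteq> (\<lambda>_. 0)"
    using Z unfolding is_eigenfunction_def by blast+
  have Psi_even: "Psi W (- P) = Psi W P" for P
    by (simp add: Psi_def)
  show ?thesis
    unfolding is_eigenfunction_def
  proof (intro conjI allI impI)
    show "continuous_on UNIV (\<lambda>P. Z (- P))"
      using continuous_on_compose2[OF cont continuous_on_minus[OF continuous_on_id]] by simp
    from growth obtain C where C: "\<forall>P. norm (Z P) \<le> C * (1 + \<bar>P\<bar>)" ..
    have "norm (Z (- P)) \<le> C * (1 + \<bar>P\<bar>)" for P
      using C[rule_format, of "- P"] by simp
    then show "\<exists>C. \<forall>P. norm (Z (- P)) \<le> C * (1 + \<bar>P\<bar>)"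
      by blast
    show "(\<lambda>P. Z (- P)) \<noteq> (\<lambda>_. 0)"
    proof
      assume vanish: "(\<lambda>P. Z (- P)) = (\<lambda>_. 0)"
      have "Z P = 0" for P
        using fun_cong[OF vanish, of "- P"] by simp
      with nonzero show False
        by blast
    qed
    fix P assume "P \<noteq> - W \<and> P \<noteq> W"
    then have "- P \<noteq> - W \<and> - P \<noteq> W"
      by auto
    then obtain Z' where Z': "(Z has_vector_derivative Z') (at (- P))" and
      eq: "complex_of_real \<tau> * lam * Z (- P) =
             complex_of_real (\<tau> * \<Omega>) * Z' - Z (- P)
             + complex_of_real (Psi W (- P) / \<kappa>) * Z (- P)
             - complex_of_real (1 / \<kappa>) * integral UNIV (\<lambda>Q. complex_of_real (Psi W Q) * Z Q)"
      using Z unfolding is_eigenfunction_def by blast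
    have "((uminus :: real \<Rightarrow> real) has_vector_derivative -1) (at P)"
      using has_real_derivative_iff_has_vector_derivative by (auto intro!: derivative_eq_intros)
    from vector_diff_chain_at[OF this, of Z Z'] Z'
    have "((\<lambda>P. Z (- P)) has_vector_derivative - Z') (at P)"
      by (simp add: o_def)
    with eq show "\<exists>Z'. ((\<lambda>P. Z (- P)) has_vector_derivative Z') (at P) \<and>
             complex_of_real \<tau> * lam * Z (- P) =
             complex_of_real (\<tau> * - \<Omega>) * Z' - Z (- P) +
             complex_of_real (Psi W P / \<kappa>) * Z (- P) -
             complex_of_real (1 / \<kappa>) * integral UNIV (\<lambda>Q. complex_of_real (Psi W Q) * Z (- Q))"
      unfolding integral_Psi_mult_reflect[OF cont] Psi_even by (intro exI[of _ "- Z'"]) simp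
  qed
qed

lemma is_eigenfunction_abs_drift:
  assumes "\<Omega> \<noteq> 0"
  shows "is_eigenfunction \<kappa> \<tau> \<Omega> W lam Z
           \<longleftrightarrow> is_eigenfunction \<kappa> \<tau> \<bar>\<Omega>\<bar> W lam (\<lambda>P. Z (sgn \<Omega> * P))"
proof (cases "\<Omega> > 0")
  case False
  with assms have "\<bar>\<Omega>\<bar> = - \<Omega>" "sgn \<Omega> = -1"
    by auto
  then show ?thesis
    using is_eigenfunction_reflect[of \<kappa> \<tau> "- \<Omega>" W lam "\<lambda>P. Z (- P)"]
      is_eigenfunction_reflect[of \<kappa> \<tau> \<Omega> W lam Z]
    by auto
qed simp

lemma is_eigenvalue_abs_drift:
  assumes "\<Omega> \<noteq> 0"
  shows "is_eigenvalue \<kappa> \<tau> \<bar>\<Omega>\<bar> W lam \<longleftrightarrow> is_eigenvalue \<kappa> \<tau> \<Omega> W lam"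
proof -
  have involution: "(\<lambda>P. (\<lambda>P. Z (sgn \<Omega> * P)) (sgn \<Omega> * P)) = Z" for Z :: "real \<Rightarrow> complex"
    using assms by (cases "\<Omega> > 0") auto
  show ?thesis
    unfolding is_eigenvalue_def is_eigenfunction_abs_drift[OF assms]
  proof
    assume "\<exists>Z. is_eigenfunction \<kappa> \<tau> \<bar>\<Omega>\<bar> W lam Z"
    then obtain Z where "is_eigenfunction \<kappa> \<tau> \<bar>\<Omega>\<bar> W lam Z" ..
    then have "is_eigenfunction \<kappa> \<tau> \<bar>\<Omega>\<bar> W lam (\<lambda>P. (\<lambda>P. Z (sgn \<Omega> * P)) (sgn \<Omega> * P))"
      by (simp only: involution)
    then show "\<exists>Z. is_eigenfunction \<kappa> \<tau> \<bar>\<Omega>\<bar> W lam (\<lambda>P. Z (sgn \<Omega> * P))"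
      by (rule exI[of _ "\<lambda>P. Z (sgn \<Omega> * P)"])
  qed blast
qed

section \<open>Positive drift\<close>

locale stripe_eigenproblem =
  fixes \<kappa> \<tau> \<Omega> W :: real and lam :: complex
  assumes kappa_pos: "0 < \<kappa>" and tau_pos: "0 < \<tau>" and Omega_pos: "0 < \<Omega>" and W_pos: "0 < W"
begin

definition \<mu> :: complex where "\<mu> = of_real \<tau> * lam + 1"
definition \<nu> :: complex where "\<nu> = of_real \<kappa> * \<mu> - 1"
definition \<sigma> :: real where "\<sigma> = \<kappa> * \<tau> * \<Omega>"
definition outer_rate :: complex where "outer_rate = \<mu> / of_real (\<tau> * \<Omega>)"
definition inner_rate :: complex where "inner_rate = \<nu> / of_real \<sigma>"
definition rate :: "real \<Rightarrow> complex" where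
  "rate P = (if \<bar>P\<bar> < W then inner_rate else outer_rate)"
definition stripe_integral :: "(real \<Rightarrow> complex) \<Rightarrow> complex" where
  "stripe_integral Z = integral UNIV (\<lambda>Q. of_real (Psi W Q) * Z Q)"

lemma sigma_pos: "0 < \<sigma>"
  using kappa_pos tau_pos Omega_pos by (simp add: \<sigma>_def)

lemma Re_outer_rate: "Re outer_rate = Re \<mu> / (\<tau> * \<Omega>)"
  by (simp add: outer_rate_def Re_divide_of_real)

lemma eigen_equation_iff_rate:
  assumes "\<bar>P\<bar> \<noteq> W"
  shows "of_real \<tau> * lam * z = of_real (\<tau> * \<Omega>) * z' - z + of_real (Psi W P / \<kappa>) * z - of_real (1 / \<kappa>) * I
           \<longleftrightarrow> z' = rate P * z + I / of_real \<sigma>"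
proof -
  have "of_real \<tau> * lam * z = of_real (\<tau> * \<Omega>) * z' - z + of_real (Psi W P / \<kappa>) * z
                   - of_real (1 / \<kappa>) * I
        \<longleftrightarrow> of_real (\<tau> * \<Omega>) * z' = (\<mu> - of_real (Psi W P / \<kappa>)) * z + of_real (1 / \<kappa>) * I"
    unfolding \<mu>_def by (auto simp: algebra_simps)
  also have "\<dots> \<longleftrightarrow> z' = ((\<mu> - of_real (Psi W P / \<kappa>)) * z + of_real (1 / \<kappa>) * I) / of_real (\<tau> * \<Omega>)"
    using tau_pos Omega_pos by (auto simp: eq_divide_eq mult.commute)
  also have "((\<mu> - of_real (Psi W P / \<kappa>)) * z + of_real (1 / \<kappa>) * I) / of_real (\<tau> * \<Omega>)
               = rate P * z + I / of_real \<sigma>"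
    using kappa_pos tau_pos Omega_pos assms
    by (simp add: Psi_def rate_def inner_rate_def outer_rate_def \<nu>_def \<sigma>_def field_simps)
  finally show ?thesis .
qed

lemma is_eigenfunction_iff:
  "is_eigenfunction \<kappa> \<tau> \<Omega> W lam Z \<longleftrightarrow>
     continuous_on UNIV Z \<and> (\<exists>C. \<forall>P. norm (Z P) \<le> C * (1 + \<bar>P\<bar>)) \<and> Z \<noteq> (\<lambda>_. 0) \<and>
     (\<forall>P. \<bar>P\<bar> \<noteq> W \<longrightarrow>
        (Z has_vector_derivative rate P * Z P + stripe_integral Z / of_real \<sigma>) (at P))"
proof -
  have "(P \<noteq> - W \<and> P \<noteq> W \<longrightarrow>
          (\<exists>Z'. (Z has_vector_derivative Z') (at P) \<and>
             of_real \<tau> * lam * Z P = of_real (\<tau> * \<Omega>) * Z' - Z P + of_real (Psi W P / \<kappa>) * Z P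
               - of_real (1 / \<kappa>) * integral UNIV (\<lambda>Q. of_real (Psi W Q) * Z Q)))
        \<longleftrightarrow> (\<bar>P\<bar> \<noteq> W \<longrightarrow>
               (Z has_vector_derivative rate P * Z P + stripe_integral Z / of_real \<sigma>) (at P))" for P
    using eigen_equation_iff_rate[of P] W_pos unfolding stripe_integral_def by auto
  then show ?thesis
    unfolding is_eigenfunction_def by presburger
qed

lemma eigenfunction_affine_flow:
  assumes Z: "is_eigenfunction \<kappa> \<tau> \<Omega> W lam Z"
    and "convex S" "c \<in> S" "P \<in> S" and rate: "\<And>t. t \<in> S \<Longrightarrow> \<bar>t\<bar> \<noteq> W \<Longrightarrow> rate t = r"
  shows "Z P = affine_flow r (stripe_integral Z / of_real \<sigma>) (Z c) (P - c)"
proof (rule affine_flow_unique[where K = "{-W, W}"])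
  show "continuous_on S Z"
    using Z unfolding is_eigenfunction_iff by (blast intro: continuous_on_subset)
  fix t assume "t \<in> S - {-W, W}"
  then have "t \<in> S" "\<bar>t\<bar> \<noteq> W"
    by auto
  then show "(Z has_vector_derivative r * Z t + stripe_integral Z / of_real \<sigma>) (at t)"
    using Z rate unfolding is_eigenfunction_iff by metis
qed (use assms in auto)

definition profile :: "complex \<Rightarrow> (real \<Rightarrow> complex) \<Rightarrow> real \<Rightarrow> complex" where
  "profile I f P =
     (if P \<le> -W then affine_flow outer_rate (I / of_real \<sigma>) (f (-W)) (P + W)
      else if P \<le> W then f P
      else affine_flow outer_rate (I / of_real \<sigma>) (f W) (P - W))"

lemma profile_left: "P \<le> -W \<Longrightarrow> profile I f P = affine_flow outer_rate (I / of_real \<sigma>) (f (-W)) (P + W)"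
  by (simp add: profile_def)

lemma profile_inside: "\<bar>P\<bar> \<le> W \<Longrightarrow> profile I f P = f P"
  by (cases "P = -W") (auto simp: profile_def)

lemma profile_right: "W \<le> P \<Longrightarrow> profile I f P = affine_flow outer_rate (I / of_real \<sigma>) (f W) (P - W)"
  using W_pos by (auto simp: profile_def)

lemma profile_scale: "profile (x * I) (\<lambda>P. x * f P) P = x * profile I f P"
  using affine_flow_scale[of outer_rate x "I / of_real \<sigma>"] by (simp add: profile_def)

lemma eigenfunction_eq_profile:
  assumes Z: "is_eigenfunction \<kappa> \<tau> \<Omega> W lam Z" and c: "\<bar>c\<bar> \<le> W"
  shows "Z P = profile (stripe_integral Z)
                 (\<lambda>P. affine_flow inner_rate (stripe_integral Z / of_real \<sigma>) (Z c) (P - c)) P"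
proof -
  have inside: "Z Q = affine_flow inner_rate (stripe_integral Z / of_real \<sigma>) (Z c) (Q - c)"
    if "\<bar>Q\<bar> \<le> W" for Q
    by (rule eigenfunction_affine_flow[OF Z, of "{-W..W}"]) (use c that in \<open>auto simp: rate_def\<close>)
  consider "P \<le> -W" | "\<bar>P\<bar> \<le> W" | "W \<le> P"
    by linarith
  then show ?thesis
  proof cases
    case 1
    have "Z P = affine_flow outer_rate (stripe_integral Z / of_real \<sigma>) (Z (-W)) (P - -W)"
      by (rule eigenfunction_affine_flow[OF Z, of "{..-W}"]) (use 1 W_pos in \<open>auto simp: rate_def\<close>)
    then show ?thesis
      using 1 inside[of "-W"] W_pos by (simp add: profile_left)
  next
    case 2
    then show ?thesis
      using inside by (simp add: profile_inside)
  next
    case 3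
    have "Z P = affine_flow outer_rate (stripe_integral Z / of_real \<sigma>) (Z W) (P - W)"
      by (rule eigenfunction_affine_flow[OF Z, of "{W..}"]) (use 3 W_pos in \<open>auto simp: rate_def\<close>)
    then show ?thesis
      using 3 inside[of W] W_pos by (simp add: profile_right)
  qed
qed

lemma eigenfunction_shifted_growth:
  assumes Z: "is_eigenfunction \<kappa> \<tau> \<Omega> W lam Z" and "\<bar>c\<bar> \<le> W"
  obtains A B where "\<And>t. norm (Z (c + t)) \<le> A + B * \<bar>t\<bar>"
proof -
  obtain C where C: "\<And>P. norm (Z P) \<le> C * (1 + \<bar>P\<bar>)"
    using Z unfolding is_eigenfunction_def by blast
  have "norm (Z (c + t)) \<le> \<bar>C\<bar> * (1 + W) + \<bar>C\<bar> * \<bar>t\<bar>" for t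
  proof -
    have "C * (1 + \<bar>c + t\<bar>) \<le> \<bar>C\<bar> * (1 + \<bar>c + t\<bar>)"
      by (intro mult_right_mono) auto
    also have "\<dots> \<le> \<bar>C\<bar> * (1 + W + \<bar>t\<bar>)"
      using assms(2) by (intro mult_left_mono) auto
    finally show ?thesis
      using C[of "c + t"] by (simp add: algebra_simps)
  qed
  then show ?thesis
    using that by blast
qed

text \<open>On the side of the stripe where the outer flow grows exponentially, linear growth pins an
  eigenfunction to the equilibrium of that flow.\<close>

definition pinned_end :: real where "pinned_end = (if Re \<mu> < 0 then -W else W)"

lemma abs_pinned_end: "\<bar>pinned_end\<bar> \<le> W"
  using W_pos by (simp add: pinned_end_def)

lemma eigenfunction_equilibrium_left:
  assumes Z: "is_eigenfunction \<kappa> \<tau> \<Omega> W lam Z" and "Re \<mu> < 0"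
  shows "Z (-W) = - (stripe_integral Z / of_real \<sigma>) / outer_rate"
proof -
  obtain A B where growth: "\<And>t. norm (Z (-W + t)) \<le> A + B * \<bar>t\<bar>"
    using eigenfunction_shifted_growth[OF Z, of "-W"] W_pos by auto
  show ?thesis
  proof (rule affine_flow_growth_at_bot_imp_equilibrium)
    show "Re outer_rate < 0"
      using assms(2) tau_pos Omega_pos by (simp add: Re_outer_rate divide_neg_pos)
    fix t :: real assume "t \<le> 0"
    then have "Z (-W + t) = affine_flow outer_rate (stripe_integral Z / of_real \<sigma>) (Z (-W)) t"
      using eigenfunction_affine_flow[OF Z, of "{..-W}" "-W" "-W + t" outer_rate] W_pos
      by (auto simp: rate_def)
    then show "norm (affine_flow outer_rate (stripe_integral Z / of_real \<sigma>) (Z (-W)) t) \<le> A + B * \<bar>t\<bar>"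
      using growth[of t] by simp
  qed
qed

lemma eigenfunction_equilibrium_right:
  assumes Z: "is_eigenfunction \<kappa> \<tau> \<Omega> W lam Z" and "0 < Re \<mu>"
  shows "Z W = - (stripe_integral Z / of_real \<sigma>) / outer_rate"
proof -
  obtain A B where growth: "\<And>t. norm (Z (W + t)) \<le> A + B * \<bar>t\<bar>"
    using eigenfunction_shifted_growth[OF Z, of W] W_pos by auto
  show ?thesis
  proof (rule affine_flow_growth_at_top_imp_equilibrium)
    show "0 < Re outer_rate"
      using assms(2) tau_pos Omega_pos by (simp add: Re_outer_rate)
    fix t :: real assume "0 \<le> t"
    then have "Z (W + t) = affine_flow outer_rate (stripe_integral Z / of_real \<sigma>) (Z W) t"
      using eigenfunction_affine_flow[OF Z, of "{W..}" W "W + t" outer_rate] W_pos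
      by (auto simp: rate_def)
    then show "norm (affine_flow outer_rate (stripe_integral Z / of_real \<sigma>) (Z W) t) \<le> A + B * \<bar>t\<bar>"
      using growth[of t] by simp
  qed
qed

lemma eigenfunction_pinned:
  assumes "is_eigenfunction \<kappa> \<tau> \<Omega> W lam Z" and "Re \<mu> \<noteq> 0"
  shows "Z pinned_end = - (stripe_integral Z / of_real \<sigma>) / outer_rate"
  using eigenfunction_equilibrium_left[OF assms(1)] eigenfunction_equilibrium_right[OF assms(1)] assms(2)
  by (auto simp: pinned_end_def)

definition inner_mode :: "real \<Rightarrow> complex" where
  "inner_mode P =
     affine_flow inner_rate (1 / of_real \<sigma>) (- (1 / of_real \<sigma>) / outer_rate) (P - pinned_end)"

definition normalized_mode :: "real \<Rightarrow> complex" where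
  "normalized_mode = profile 1 inner_mode"

lemma outer_equilibrium: "\<mu> \<noteq> 0 \<Longrightarrow> (1 / of_real \<sigma>) / outer_rate = 1 / (of_real \<kappa> * \<mu>)"
  using kappa_pos tau_pos Omega_pos by (simp add: outer_rate_def \<sigma>_def field_simps)

lemma eigenfunction_eq_scaled_mode:
  assumes Z: "is_eigenfunction \<kappa> \<tau> \<Omega> W lam Z" and "Re \<mu> \<noteq> 0"
  shows "Z P = stripe_integral Z * normalized_mode P"
proof -
  define I where "I = stripe_integral Z"
  from eigenfunction_eq_profile[OF Z abs_pinned_end]
  have "Z P = profile (I * 1) (\<lambda>Q. affine_flow inner_rate (I * (1 / of_real \<sigma>))
                                  (I * (- (1 / of_real \<sigma>) / outer_rate)) (Q - pinned_end)) P"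
    unfolding eigenfunction_pinned[OF assms] I_def by simp
  then show ?thesis
    unfolding affine_flow_scale profile_scale normalized_mode_def inner_mode_def[abs_def] I_def .
qed

lemma stripe_integral_eq:
  assumes "\<And>P. \<bar>P\<bar> \<le> W \<Longrightarrow> Z P = g P" and "(g has_integral J) {-W..W}"
  shows "stripe_integral Z = J"
proof -
  have "(Z has_integral J) {-W..W}"
    using assms(2) by (rule has_integral_cong[THEN iffD1, rotated]) (use assms(1) in auto)
  then show ?thesis
    unfolding stripe_integral_def by (intro integral_unique has_integral_Psi_mult)
qed

lemma stripe_integral_nonzero:
  assumes Z: "is_eigenfunction \<kappa> \<tau> \<Omega> W lam Z" and "Re \<mu> \<noteq> 0"
  shows "stripe_integral Z \<noteq> 0"
proof
  assume "stripe_integral Z = 0"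
  then have "Z = (\<lambda>_. 0)"
    using eigenfunction_eq_scaled_mode[OF assms] by auto
  with Z show False
    unfolding is_eigenfunction_def by blast
qed

lemma continuous_on_profile:
  assumes "continuous_on UNIV f"
  shows "continuous_on UNIV (profile I f)"
proof -
  have right: "continuous_on UNIV
      (\<lambda>P. if P \<le> W then f P else affine_flow outer_rate (I / of_real \<sigma>) (f W) (P - W))"
  proof (rule continuous_on_cases_le[where h = "\<lambda>P. P"])
    show "continuous_on {P \<in> UNIV. P \<le> W} f"
      using assms by (rule continuous_on_subset) simp
  qed (auto intro: continuous_on_affine_flow continuous_on_id)
  show ?thesis
    unfolding profile_def[abs_def]
  proof (rule continuous_on_cases_le[where h = "\<lambda>P. P"])
    show "continuous_on {P \<in> UNIV. P \<le> -W}
            (\<lambda>P. affine_flow outer_rate (I / of_real \<sigma>) (f (-W)) (P + W))"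
      using continuous_on_affine_flow[of _ outer_rate "I / of_real \<sigma>" "f (-W)" "-W"] by simp
    show "continuous_on {P \<in> UNIV. -W \<le> P}
            (\<lambda>P. if P \<le> W then f P else affine_flow outer_rate (I / of_real \<sigma>) (f W) (P - W))"
      using right by (rule continuous_on_subset) simp
  qed (use W_pos in \<open>auto intro: continuous_on_id\<close>)
qed

lemma profile_has_vector_derivative:
  assumes f': "\<And>P. (f has_vector_derivative inner_rate * f P + I / of_real \<sigma>) (at P)"
    and "\<bar>P\<bar> \<noteq> W"
  shows "(profile I f has_vector_derivative rate P * profile I f P + I / of_real \<sigma>) (at P)"
proof -
  consider "P < -W" | "\<bar>P\<bar> < W" | "W < P"
    using assms(2) by linarith
  then show ?thesis
  proof cases
    case 1
    then have rate_eq: "rate P = outer_rate"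
      and profile_eq: "profile I f P = affine_flow outer_rate (I / of_real \<sigma>) (f (-W)) (P + W)"
      using W_pos by (auto simp: rate_def profile_left)
    have "((\<lambda>t. affine_flow outer_rate (I / of_real \<sigma>) (f (-W)) (t + W)) has_vector_derivative
            outer_rate * affine_flow outer_rate (I / of_real \<sigma>) (f (-W)) (P + W) + I / of_real \<sigma>) (at P)"
      using has_vector_derivative_affine_flow[of outer_rate _ _ "-W"] by simp
    then show ?thesis
      unfolding rate_eq profile_eq
      by (rule has_vector_derivative_transform_within_open[where S = "{..<-W}"])
        (use 1 in \<open>auto simp: profile_left\<close>)
  next
    case 2
    then have rate_eq: "rate P = inner_rate" and profile_eq: "profile I f P = f P"
      by (auto simp: rate_def profile_inside)
    show ?thesis
      unfolding rate_eq profile_eq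
      by (rule has_vector_derivative_transform_within_open[OF f', where S = "{-W<..<W}"])
        (use 2 in \<open>auto simp: profile_inside\<close>)
  next
    case 3
    then have rate_eq: "rate P = outer_rate"
      and profile_eq: "profile I f P = affine_flow outer_rate (I / of_real \<sigma>) (f W) (P - W)"
      using W_pos by (auto simp: rate_def profile_right)
    have "((\<lambda>t. affine_flow outer_rate (I / of_real \<sigma>) (f W) (t - W)) has_vector_derivative
            outer_rate * affine_flow outer_rate (I / of_real \<sigma>) (f W) (P - W) + I / of_real \<sigma>) (at P)"
      by (rule has_vector_derivative_affine_flow)
    then show ?thesis
      unfolding rate_eq profile_eq
      by (rule has_vector_derivative_transform_within_open[where S = "{W<..}"])
        (use 3 in \<open>auto simp: profile_right\<close>)
  qed
qed

lemma profile_is_eigenfunction: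
  assumes f': "\<And>P. (f has_vector_derivative inner_rate * f P + I / of_real \<sigma>) (at P)"
    and integral: "(f has_integral I) {-W..W}"
    and growth: "\<exists>C. \<forall>P. norm (profile I f P) \<le> C * (1 + \<bar>P\<bar>)"
    and nonzero: "\<exists>P\<in>{-W..W}. f P \<noteq> 0"
  shows "is_eigenfunction \<kappa> \<tau> \<Omega> W lam (profile I f)"
  unfolding is_eigenfunction_iff
proof (intro conjI allI impI)
  have "isCont f P" for P
    by (rule has_vector_derivative_continuous[OF f'])
  then show "continuous_on UNIV (profile I f)"
    by (simp add: continuous_on_profile continuous_at_imp_continuous_on)
  show "\<exists>C. \<forall>P. norm (profile I f P) \<le> C * (1 + \<bar>P\<bar>)"
    by (fact growth)
  from nonzero obtain P where "P \<in> {-W..W}" "f P \<noteq> 0" ..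
  then have "\<bar>P\<bar> \<le> W" "f P \<noteq> 0"
    by auto
  then show "profile I f \<noteq> (\<lambda>_. 0)"
    by (metis profile_inside)
  have "stripe_integral (profile I f) = I"
    by (rule stripe_integral_eq[where g = f]) (simp_all add: profile_inside integral)
  then show "(profile I f has_vector_derivative
               rate P * profile I f P + stripe_integral (profile I f) / of_real \<sigma>) (at P)"
    if "\<bar>P\<bar> \<noteq> W" for P
    using profile_has_vector_derivative[OF f' that] by simp
qed

lemma continuous_on_Icc_profile:
  assumes "continuous_on {-W..W} f"
  shows "continuous_on {-W..W} (profile I f)"
  using assms by (rule continuous_on_cong[THEN iffD1, rotated 2]) (auto simp: profile_inside)

lemma profile_linear_growth:
  assumes cont: "continuous_on {-W..W} f"
    and left: "0 \<le> Re outer_rate \<or> f (-W) = - (I / of_real \<sigma>) / outer_rate"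
    and right: "Re outer_rate \<le> 0 \<or> f W = - (I / of_real \<sigma>) / outer_rate"
  shows "\<exists>C. \<forall>P. norm (profile I f P) \<le> C * (1 + \<bar>P\<bar>)"
proof -
  define K where
    "K v = norm v + 2 * norm ((I / of_real \<sigma>) / outer_rate) + norm (I / of_real \<sigma>)" for v :: complex
  define L where "L = K (f (-W)) + K (f W)"
  have shifted: "K v * (1 + \<bar>t\<bar>) \<le> L * (1 + W) + L * \<bar>P\<bar>"
    if "K v \<le> L" and "\<bar>t\<bar> \<le> \<bar>P\<bar> + W" for v t P
  proof -
    have "K v * (1 + \<bar>t\<bar>) \<le> K v * (1 + W + \<bar>P\<bar>)"
      using that(2) by (intro mult_left_mono) (auto simp: K_def)
    also have "\<dots> \<le> L * (1 + W + \<bar>P\<bar>)"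
      using that(1) W_pos by (intro mult_right_mono) auto
    finally show ?thesis
      by (simp add: algebra_simps)
  qed
  show ?thesis
  proof (rule linear_growth_if_outside)
    show "continuous_on {-W..W} (profile I f)"
      by (rule continuous_on_Icc_profile[OF cont])
    fix P :: real assume "W \<le> \<bar>P\<bar>"
    then consider "P \<le> -W" | "W \<le> P"
      by linarith
    then show "norm (profile I f P) \<le> L * (1 + W) + L * \<bar>P\<bar>"
    proof cases
      case 1
      have "Re outer_rate * (P + W) \<le> 0 \<or> f (-W) = - (I / of_real \<sigma>) / outer_rate"
        using left 1 by (auto intro: mult_nonneg_nonpos)
      from norm_affine_flow_le_linear[OF this]
      have "norm (profile I f P) \<le> K (f (-W)) * (1 + \<bar>P + W\<bar>)"
        using 1 by (simp add: profile_left K_def)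
      also have "\<dots> \<le> L * (1 + W) + L * \<bar>P\<bar>"
        by (rule shifted) (use W_pos in \<open>auto simp: L_def K_def\<close>)
      finally show ?thesis .
    next
      case 2
      have "Re outer_rate * (P - W) \<le> 0 \<or> f W = - (I / of_real \<sigma>) / outer_rate"
        using right 2 by (auto intro: mult_nonpos_nonneg)
      from norm_affine_flow_le_linear[OF this]
      have "norm (profile I f P) \<le> K (f W) * (1 + \<bar>P - W\<bar>)"
        using 2 by (simp add: profile_right K_def)
      also have "\<dots> \<le> L * (1 + W) + L * \<bar>P\<bar>"
        by (rule shifted) (use W_pos in \<open>auto simp: L_def K_def\<close>)
      finally show ?thesis .
    qed
  qed
qed

lemma bounded_profile:
  assumes "outer_rate \<noteq> 0" and cont: "continuous_on {-W..W} f"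
    and left: "0 \<le> Re outer_rate \<or> f (-W) = - (I / of_real \<sigma>) / outer_rate"
    and right: "Re outer_rate \<le> 0 \<or> f W = - (I / of_real \<sigma>) / outer_rate"
  shows "bounded (range (profile I f))"
proof (rule bounded_range_if_outside)
  show "continuous_on {-W..W} (profile I f)"
    by (rule continuous_on_Icc_profile[OF cont])
  fix P :: real assume "W \<le> \<bar>P\<bar>"
  then consider "P \<le> -W" | "W \<le> P"
    by linarith
  then show "norm (profile I f P) \<le> norm (f (-W)) + norm (f W) + 2 * norm ((I / of_real \<sigma>) / outer_rate)"
  proof cases
    case 1
    have "Re outer_rate * (P + W) \<le> 0 \<or> f (-W) = - (I / of_real \<sigma>) / outer_rate"
      using left 1 by (auto intro: mult_nonneg_nonpos)
    from norm_affine_flow_le[OF assms(1) this] 1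
    have "norm (profile I f P) \<le> norm (f (-W)) + 2 * norm ((I / of_real \<sigma>) / outer_rate)"
      by (simp only: profile_left)
    with norm_ge_zero[of "f W"] show ?thesis
      by linarith
  next
    case 2
    have "Re outer_rate * (P - W) \<le> 0 \<or> f W = - (I / of_real \<sigma>) / outer_rate"
      using right 2 by (auto intro: mult_nonpos_nonneg)
    from norm_affine_flow_le[OF assms(1) this] 2
    have "norm (profile I f P) \<le> norm (f W) + 2 * norm ((I / of_real \<sigma>) / outer_rate)"
      by (simp only: profile_right)
    with norm_ge_zero[of "f (-W)"] show ?thesis
      by linarith
  qed
qed

lemma has_vector_derivative_inner_mode:
  "(inner_mode has_vector_derivative inner_rate * inner_mode P + 1 / of_real \<sigma>) (at P)"
  unfolding inner_mode_def[abs_def] by (rule has_vector_derivative_affine_flow)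

lemma continuous_on_inner_mode: "continuous_on S inner_mode"
  unfolding inner_mode_def[abs_def] by (rule continuous_on_affine_flow)

lemma bounded_normalized_mode:
  assumes "Re \<mu> \<noteq> 0"
  shows "bounded (range normalized_mode)"
  unfolding normalized_mode_def
proof (rule bounded_profile)
  show "outer_rate \<noteq> 0"
    using assms tau_pos Omega_pos by (auto simp: outer_rate_def)
  show "continuous_on {-W..W} inner_mode"
    by (rule continuous_on_inner_mode)
  have pinned: "inner_mode pinned_end = - (1 / of_real \<sigma>) / outer_rate"
    by (simp add: inner_mode_def)
  have "Re outer_rate < 0 \<and> pinned_end = -W" if "Re \<mu> < 0"
    using that tau_pos Omega_pos by (simp add: Re_outer_rate divide_neg_pos pinned_end_def)
  moreover have "0 < Re outer_rate \<and> pinned_end = W" if "\<not> Re \<mu> < 0"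
    using that assms tau_pos Omega_pos by (simp add: Re_outer_rate pinned_end_def)
  ultimately show "0 \<le> Re outer_rate \<or> inner_mode (-W) = - (1 / of_real \<sigma>) / outer_rate"
    and "Re outer_rate \<le> 0 \<or> inner_mode W = - (1 / of_real \<sigma>) / outer_rate"
    using pinned by (cases "Re \<mu> < 0"; force)+
qed

lemma eigenfunction_imp_inner_mode_integral:
  assumes Z: "is_eigenfunction \<kappa> \<tau> \<Omega> W lam Z" and "Re \<mu> \<noteq> 0"
  shows "(inner_mode has_integral 1) {-W..W}"
proof -
  define J where "J = integral {-W..W} inner_mode"
  have J: "(inner_mode has_integral J) {-W..W}"
    unfolding J_def by (intro integrable_integral integrable_continuous_interval continuous_on_inner_mode)
  have "stripe_integral Z = stripe_integral Z * J"
  proof (rule stripe_integral_eq)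
    show "Z P = stripe_integral Z * inner_mode P" if "\<bar>P\<bar> \<le> W" for P
      using eigenfunction_eq_scaled_mode[OF assms, of P] that
      by (simp add: normalized_mode_def profile_inside)
    show "((\<lambda>P. stripe_integral Z * inner_mode P) has_integral stripe_integral Z * J) {-W..W}"
      by (rule has_integral_mult_right[OF J])
  qed
  then have "J = 1"
    using stripe_integral_nonzero[OF assms] by simp
  with J show ?thesis
    by simp
qed

lemma normalized_mode_is_eigenfunction:
  assumes "Re \<mu> \<noteq> 0" and integral: "(inner_mode has_integral 1) {-W..W}"
  shows "is_eigenfunction \<kappa> \<tau> \<Omega> W lam normalized_mode"
  unfolding normalized_mode_def
proof (rule profile_is_eigenfunction)
  show "(inner_mode has_vector_derivative inner_rate * inner_mode P + 1 / of_real \<sigma>) (at P)" for P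
    by (rule has_vector_derivative_inner_mode)
  show "\<exists>C. \<forall>P. norm (profile 1 inner_mode P) \<le> C * (1 + \<bar>P\<bar>)"
    using bounded_normalized_mode[OF assms(1)] unfolding normalized_mode_def
    by (rule bounded_imp_linear_growth)
  show "\<exists>P\<in>{-W..W}. inner_mode P \<noteq> 0"
    using has_integral_nonzero_imp_nonzero[OF integral] by simp
qed (fact integral)

lemma eigenvalue_iff_inner_mode_integral:
  assumes "Re \<mu> \<noteq> 0"
  shows "is_eigenvalue \<kappa> \<tau> \<Omega> W lam \<longleftrightarrow> (inner_mode has_integral 1) {-W..W}"
  using eigenfunction_imp_inner_mode_integral normalized_mode_is_eigenfunction assms
  unfolding is_eigenvalue_def by blast

lemma inner_mode_has_integral_1_iff:
  assumes "\<mu> \<noteq> 0" and "\<nu> \<noteq> 0"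
  shows "(inner_mode has_integral 1) {-W..W} \<longleftrightarrow>
           exp (inner_rate * of_real (W - pinned_end)) - exp (inner_rate * of_real (-W - pinned_end))
             = of_real \<kappa> * \<mu> * \<nu> * (\<nu> + of_real (2 * W)) / of_real \<sigma>"
proof -
  define E where
    "E = exp (inner_rate * of_real (W - pinned_end)) - exp (inner_rate * of_real (-W - pinned_end))"
  have \<kappa>\<mu>: "of_real \<kappa> * \<mu> = \<nu> + 1"
    by (simp add: \<nu>_def)
  have nonzero: "\<nu> + 1 \<noteq> 0" "(of_real \<sigma> :: complex) \<noteq> 0"
    using assms(1) kappa_pos sigma_pos \<kappa>\<mu> by auto
  have b: "(1 / of_real \<sigma>) / inner_rate = 1 / \<nu>" "inner_rate \<noteq> 0"
    using assms(2) nonzero by (simp_all add: inner_rate_def)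
  have "(inner_mode has_integral
          (- (1 / of_real \<sigma>) / outer_rate + (1 / of_real \<sigma>) / inner_rate) * E / inner_rate
            - (1 / of_real \<sigma>) / inner_rate * of_real (W - - W)) {-W..W}"
    using has_integral_affine_flow[of "-W" W inner_rate "1 / of_real \<sigma>"
        "- (1 / of_real \<sigma>) / outer_rate" pinned_end] W_pos
    unfolding inner_mode_def[abs_def] E_def by (simp only: b(2) if_False)
  moreover have "(- (1 / of_real \<sigma>) / outer_rate + (1 / of_real \<sigma>) / inner_rate) * E / inner_rate
                   - (1 / of_real \<sigma>) / inner_rate * of_real (W - - W)
                 = E * of_real \<sigma> / (of_real \<kappa> * \<mu> * \<nu> * \<nu>) - 2 * of_real W / \<nu>"
    using outer_equilibrium[OF assms(1)] b assms nonzero unfolding \<kappa>\<mu>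
    by (simp add: inner_rate_def field_simps)
  moreover have "E * of_real \<sigma> / (of_real \<kappa> * \<mu> * \<nu> * \<nu>) - 2 * of_real W / \<nu> = 1
                   \<longleftrightarrow> E = of_real \<kappa> * \<mu> * \<nu> * (\<nu> + of_real (2 * W)) / of_real \<sigma>"
  proof -
    have "of_real \<kappa> * \<mu> * \<nu> * \<nu> \<noteq> 0"
      using assms kappa_pos by simp
    then have "E * of_real \<sigma> / (of_real \<kappa> * \<mu> * \<nu> * \<nu>) - 2 * of_real W / \<nu> = 1
                 \<longleftrightarrow> E * of_real \<sigma> = of_real \<kappa> * \<mu> * \<nu> * (\<nu> + of_real (2 * W))"
      using assms(2) by (simp add: field_simps)
    also have "\<dots> \<longleftrightarrow> E = of_real \<kappa> * \<mu> * \<nu> * (\<nu> + of_real (2 * W)) / of_real \<sigma>"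
      using nonzero(2) by (simp add: field_simps)
    finally show ?thesis .
  qed
  ultimately show ?thesis
    unfolding E_def[symmetric] by (metis has_integral_unique)
qed

lemma inner_mode_integral_ne_1:
  assumes "\<nu> = 0"
  shows "\<not> (inner_mode has_integral 1) {-W..W}"
proof
  have \<kappa>\<mu>: "of_real \<kappa> * \<mu> = 1"
    using assms by (simp add: \<nu>_def)
  then have "Re (of_real \<kappa> * \<mu>) = 1"
    by simp
  then have "\<kappa> * Re \<mu> = 1"
    by simp
  then have "0 < Re \<mu>"
    using kappa_pos zero_less_mult_iff[of \<kappa> "Re \<mu>"] by simp
  then have "pinned_end = W" and "\<mu> \<noteq> 0"
    by (auto simp: pinned_end_def)
  then have "inner_mode = (\<lambda>P. affine_flow 0 (1 / of_real \<sigma>) (- 1) (P - W))"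
    using assms outer_equilibrium \<kappa>\<mu> by (simp add: inner_mode_def[abs_def] inner_rate_def)
  then have "(inner_mode has_integral of_real (- (2 * W + 2 * W * W / \<sigma>))) {-W..W}"
    using has_integral_affine_flow[of "-W" W 0 "1 / of_real \<sigma>" "- 1" W] W_pos
    by (simp add: power2_eq_square algebra_simps)
  moreover assume "(inner_mode has_integral 1) {-W..W}"
  ultimately have "(1 :: complex) = of_real (- (2 * W + 2 * W * W / \<sigma>))"
    using has_integral_unique by blast
  then have "1 = - (2 * W + 2 * W * W / \<sigma>)"
    by (metis of_real_1 of_real_eq_iff)
  moreover have "0 < 2 * W + 2 * W * W / \<sigma>"
    using W_pos sigma_pos by (intro add_pos_pos) simp_all
  ultimately show False
    by linarith
qed

lemma inner_solution_with_stripe_integral: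
  assumes b: "inner_rate \<noteq> 0"
  obtains I v where "((\<lambda>P. affine_flow inner_rate (I / of_real \<sigma>) v P) has_integral I) {-W..W}"
    and "\<exists>P\<in>{-W..W}. affine_flow inner_rate (I / of_real \<sigma>) v P \<noteq> 0"
proof -
  define E where "E = (exp (inner_rate * of_real W) - exp (inner_rate * of_real (-W))) / inner_rate"
  define q where "q = (1 / of_real \<sigma>) / inner_rate"
  \<comment> \<open>If \<open>E = 0\<close>, the homogeneous solution \<open>exp (inner_rate * P)\<close> has zero integral over the
    stripe, so it serves with \<open>I = 0\<close>.\<close>
  define I where "I = (if E = 0 then 0 else 1 :: complex)"
  define D where "D = (if E = 0 then 1 else (1 + 2 * of_real W * q) / E)"
  define f where "f P = affine_flow inner_rate (I / of_real \<sigma>) (D - I * q) P" for P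
  have "D * E - 2 * of_real W * I * q = I"
    by (auto simp: D_def I_def field_simps)
  moreover have "(f has_integral D * E - 2 * of_real W * I * q) {-W..W}"
    using has_integral_affine_flow[of "-W" W inner_rate "I / of_real \<sigma>" "D - I * q" 0] W_pos b
    by (simp add: f_def[abs_def] E_def q_def field_simps)
  ultimately have integral: "(f has_integral I) {-W..W}"
    by simp
  have "\<exists>P\<in>{-W..W}. f P \<noteq> 0"
  proof (cases "E = 0")
    case True
    then have "f 0 = 1"
      by (simp add: f_def I_def D_def)
    then show ?thesis
      using W_pos by (intro bexI[of _ 0]) auto
  next
    case False
    then show ?thesis
      using has_integral_nonzero_imp_nonzero[OF integral] by (simp add: I_def)
  qed
  with integral show ?thesis
    unfolding f_def[abs_def] by (rule that)
qed

lemma eigenvalue_on_critical_line: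
  assumes "Re (of_real \<tau> * lam) = -1"
  shows "is_eigenvalue \<kappa> \<tau> \<Omega> W lam"
proof -
  have Re_\<mu>: "Re \<mu> = 0"
    using assms by (simp add: \<mu>_def)
  then have "Re \<nu> = -1"
    by (simp add: \<nu>_def)
  then have "inner_rate \<noteq> 0"
    using sigma_pos by (auto simp: inner_rate_def)
  then obtain I v where integral: "((\<lambda>P. affine_flow inner_rate (I / of_real \<sigma>) v P) has_integral I) {-W..W}"
    and nonzero: "\<exists>P\<in>{-W..W}. affine_flow inner_rate (I / of_real \<sigma>) v P \<noteq> 0"
    by (rule inner_solution_with_stripe_integral)
  define f where "f P = affine_flow inner_rate (I / of_real \<sigma>) v P" for P
  have "is_eigenfunction \<kappa> \<tau> \<Omega> W lam (profile I f)"
  proof (rule profile_is_eigenfunction)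
    show "(f has_vector_derivative inner_rate * f P + I / of_real \<sigma>) (at P)" for P
      using has_vector_derivative_affine_flow[of inner_rate _ v 0] by (simp add: f_def[abs_def])
    have "Re outer_rate = 0"
      using Re_\<mu> by (simp add: Re_outer_rate)
    moreover have "continuous_on {-W..W} f"
      using continuous_on_affine_flow[of _ inner_rate _ v 0] by (simp add: f_def[abs_def])
    ultimately show "\<exists>C. \<forall>P. norm (profile I f P) \<le> C * (1 + \<bar>P\<bar>)"
      by (intro profile_linear_growth) simp_all
  qed (use integral nonzero in \<open>simp_all add: f_def[abs_def]\<close>)
  then show ?thesis
    unfolding is_eigenvalue_def by blast
qed

lemma kappa_mu_eq: "of_real \<kappa> * of_real \<tau> * lam + of_real \<kappa> = of_real \<kappa> * \<mu>"
  by (simp add: \<mu>_def algebra_simps)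

lemma sigma_eq: "complex_of_real (\<kappa> * \<tau> * \<Omega>) = of_real \<sigma>"
  by (simp add: \<sigma>_def)

lemma eigenvalue_iff_below:
  assumes "Re (of_real \<tau> * lam) < -1"
  shows "is_eigenvalue \<kappa> \<tau> \<Omega> W lam \<longleftrightarrow>
    exp ((of_real \<kappa> * of_real \<tau> * lam + of_real \<kappa> - 1) / of_real (\<kappa> * \<tau> * \<Omega>) * of_real (2 * W)) - 1
      = (of_real \<kappa> * of_real \<tau> * lam + of_real \<kappa>) * (of_real \<kappa> * of_real \<tau> * lam + of_real \<kappa> - 1)
        * (of_real \<kappa> * of_real \<tau> * lam + of_real \<kappa> - 1 + of_real (2 * W)) / of_real (\<kappa> * \<tau> * \<Omega>)"
proof -
  have Re_\<mu>: "Re \<mu> < 0"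
    using assms by (simp add: \<mu>_def)
  have "Re \<nu> = \<kappa> * Re \<mu> - 1" "\<kappa> * Re \<mu> < 0"
    using Re_\<mu> kappa_pos by (simp_all add: \<nu>_def mult_pos_neg)
  with Re_\<mu> have "\<mu> \<noteq> 0" "\<nu> \<noteq> 0" "pinned_end = -W"
    by (auto simp: pinned_end_def)
  then show ?thesis
    unfolding kappa_mu_eq sigma_eq \<nu>_def[symmetric]
    using eigenvalue_iff_inner_mode_integral inner_mode_has_integral_1_iff Re_\<mu>
    by (simp add: inner_rate_def)
qed

lemma nu_eq_0_iff: "\<nu> = 0 \<longleftrightarrow> of_real \<tau> * lam = of_real ((1 - \<kappa>) / \<kappa>)"
proof -
  have "\<nu> = 0 \<longleftrightarrow> of_real \<kappa> * (of_real \<tau> * lam) = of_real (1 - \<kappa>)"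
    by (auto simp: \<nu>_def \<mu>_def algebra_simps)
  also have "\<dots> \<longleftrightarrow> of_real \<tau> * lam = of_real ((1 - \<kappa>) / \<kappa>)"
    using kappa_pos by (auto simp: field_simps)
  finally show ?thesis .
qed

lemma eigenvalue_iff_above:
  assumes "Re (of_real \<tau> * lam) > -1"
  shows "is_eigenvalue \<kappa> \<tau> \<Omega> W lam \<longleftrightarrow>
    1 - exp (- ((of_real \<kappa> * of_real \<tau> * lam + of_real \<kappa> - 1) / of_real (\<kappa> * \<tau> * \<Omega>) * of_real (2 * W)))
      = (of_real \<kappa> * of_real \<tau> * lam + of_real \<kappa>) * (of_real \<kappa> * of_real \<tau> * lam + of_real \<kappa> - 1)
        * (of_real \<kappa> * of_real \<tau> * lam + of_real \<kappa> - 1 + of_real (2 * W)) / of_real (\<kappa> * \<tau> * \<Omega>)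
    \<and> of_real \<tau> * lam \<noteq> of_real ((1 - \<kappa>) / \<kappa>)"
proof -
  have Re_\<mu>: "0 < Re \<mu>"
    using assms by (simp add: \<mu>_def)
  then have "\<mu> \<noteq> 0" "pinned_end = W"
    by (auto simp: pinned_end_def)
  show ?thesis
  proof (cases "\<nu> = 0")
    case True
    then show ?thesis
      using eigenvalue_iff_inner_mode_integral inner_mode_integral_ne_1 Re_\<mu> nu_eq_0_iff by auto
  next
    case False
    then show ?thesis
      unfolding kappa_mu_eq sigma_eq \<nu>_def[symmetric] nu_eq_0_iff[symmetric]
      using eigenvalue_iff_inner_mode_integral inner_mode_has_integral_1_iff Re_\<mu> \<open>\<mu> \<noteq> 0\<close>
        \<open>pinned_end = W\<close>
      by (simp add: inner_rate_def)
  qed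
qed

lemma eigenfunctions_proportional:
  assumes "Re (of_real \<tau> * lam) \<noteq> -1"
    and Z1: "is_eigenfunction \<kappa> \<tau> \<Omega> W lam Z1" and Z2: "is_eigenfunction \<kappa> \<tau> \<Omega> W lam Z2"
  shows "\<exists>c. Z2 = (\<lambda>P. c * Z1 P)"
proof -
  have Re_\<mu>: "Re \<mu> \<noteq> 0"
    using assms(1) by (simp add: \<mu>_def)
  have "Z2 P = stripe_integral Z2 / stripe_integral Z1 * Z1 P" for P
    using eigenfunction_eq_scaled_mode[OF Z1 Re_\<mu>, of P] eigenfunction_eq_scaled_mode[OF Z2 Re_\<mu>, of P]
      stripe_integral_nonzero[OF Z1 Re_\<mu>]
    by simp
  then show ?thesis
    by blast
qed

lemma eigenfunction_bounded:
  assumes "Re (of_real \<tau> * lam) \<noteq> -1" and Z: "is_eigenfunction \<kappa> \<tau> \<Omega> W lam Z"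
  shows "bounded (range Z)"
proof -
  have Re_\<mu>: "Re \<mu> \<noteq> 0"
    using assms(1) by (simp add: \<mu>_def)
  have "range Z = (\<lambda>x. stripe_integral Z * x) ` range normalized_mode"
    using eigenfunction_eq_scaled_mode[OF Z Re_\<mu>] by auto
  then show ?thesis
    using bounded_linear_image[OF bounded_normalized_mode[OF Re_\<mu>] bounded_linear_mult_right]
    by simp
qed

end

section \<open>The spectrum\<close>

lemma eigenfunctions_proportional_any_drift:
  assumes "0 < \<kappa>" "0 < \<tau>" "\<Omega> \<noteq> 0" "0 < W" "Re (of_real \<tau> * lam) \<noteq> -1"
    and "is_eigenfunction \<kappa> \<tau> \<Omega> W lam Z1" "is_eigenfunction \<kappa> \<tau> \<Omega> W lam Z2"
  shows "\<exists>c. Z2 = (\<lambda>P. c * Z1 P)"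
proof -
  interpret stripe_eigenproblem \<kappa> \<tau> "\<bar>\<Omega>\<bar>" W
    using assms by unfold_locales auto
  obtain c where c: "(\<lambda>P. Z2 (sgn \<Omega> * P)) = (\<lambda>P. c * Z1 (sgn \<Omega> * P))"
    using eigenfunctions_proportional assms(5-7) is_eigenfunction_abs_drift[OF assms(3)] by metis
  have "Z2 P = c * Z1 P" for P
    using fun_cong[OF c, of "sgn \<Omega> * P"] assms(3) by (cases "\<Omega> > 0") auto
  then show ?thesis
    by blast
qed

lemma eigenfunction_bounded_any_drift:
  assumes "0 < \<kappa>" "0 < \<tau>" "\<Omega> \<noteq> 0" "0 < W" "Re (of_real \<tau> * lam) \<noteq> -1"
    and "is_eigenfunction \<kappa> \<tau> \<Omega> W lam Z"
  shows "bounded (range Z)"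
proof -
  interpret stripe_eigenproblem \<kappa> \<tau> "\<bar>\<Omega>\<bar>" W
    using assms by unfold_locales auto
  have "bounded (range (\<lambda>P. Z (sgn \<Omega> * P)))"
    using eigenfunction_bounded assms(5,6) is_eigenfunction_abs_drift[OF assms(3)] by blast
  moreover have "range (\<lambda>P. Z (sgn \<Omega> * P)) = range Z"
    using assms(3) by (cases "\<Omega> > 0") (auto simp: image_def intro: exI[of _ "- _"])
  ultimately show ?thesis
    by simp
qed

theorem theorem2p2:
  fixes \<kappa> \<tau> \<Omega> W :: real
  assumes "0 < \<kappa>" "\<kappa> < 1" "0 < \<tau>" "\<Omega> \<noteq> 0" "0 < W"
  shows
    "(\<forall>lam::complex. Re (complex_of_real \<tau> * lam) < -1 \<longrightarrow>
        (is_eigenvalue \<kappa> \<tau> \<Omega> W lam \<longleftrightarrow>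
          exp ((of_real \<kappa> * of_real \<tau> * lam + of_real \<kappa> - 1)
                 / of_real (\<kappa> * \<tau> * \<bar>\<Omega>\<bar>) * of_real (2 * W)) - 1
          = (of_real \<kappa> * of_real \<tau> * lam + of_real \<kappa>)
            * (of_real \<kappa> * of_real \<tau> * lam + of_real \<kappa> - 1)
            * (of_real \<kappa> * of_real \<tau> * lam + of_real \<kappa> - 1 + of_real (2 * W))
            / of_real (\<kappa> * \<tau> * \<bar>\<Omega>\<bar>)))
     \<and> (\<forall>lam::complex. Re (complex_of_real \<tau> * lam) = -1 \<longrightarrow>
          (\<exists>Z. is_eigenfunction \<kappa> \<tau> \<Omega> W lam Z))
     \<and> (\<forall>lam::complex. Re (complex_of_real \<tau> * lam) > -1 \<longrightarrow>
        (is_eigenvalue \<kappa> \<tau> \<Omega> W lam \<longleftrightarrow>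
          (1 - exp (- ((of_real \<kappa> * of_real \<tau> * lam + of_real \<kappa> - 1)
                 / of_real (\<kappa> * \<tau> * \<bar>\<Omega>\<bar>) * of_real (2 * W)))
          = (of_real \<kappa> * of_real \<tau> * lam + of_real \<kappa>)
            * (of_real \<kappa> * of_real \<tau> * lam + of_real \<kappa> - 1)
            * (of_real \<kappa> * of_real \<tau> * lam + of_real \<kappa> - 1 + of_real (2 * W))
            / of_real (\<kappa> * \<tau> * \<bar>\<Omega>\<bar>)
          \<and> complex_of_real \<tau> * lam \<noteq> of_real ((1 - \<kappa>) / \<kappa>))))
     \<and> (\<forall>lam::complex. Re (complex_of_real \<tau> * lam) \<noteq> -1 \<and> is_eigenvalue \<kappa> \<tau> \<Omega> W lam \<longrightarrow>
          (\<forall>Z1 Z2. is_eigenfunction \<kappa> \<tau> \<Omega> W lam Z1 \<and> is_eigenfunction \<kappa> \<tau> \<Omega> W lam Z2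
              \<longrightarrow> (\<exists>c::complex. Z2 = (\<lambda>P. c * Z1 P)))
          \<and> (\<forall>Z. is_eigenfunction \<kappa> \<tau> \<Omega> W lam Z \<longrightarrow> bounded (range Z)))"
proof -
  have problem: "stripe_eigenproblem \<kappa> \<tau> \<bar>\<Omega>\<bar> W"
    using assms by unfold_locales auto
  have drift: "is_eigenvalue \<kappa> \<tau> \<bar>\<Omega>\<bar> W lam \<longleftrightarrow> is_eigenvalue \<kappa> \<tau> \<Omega> W lam" for lam
    by (rule is_eigenvalue_abs_drift[OF assms(4)])
  show ?thesis
    unfolding is_eigenvalue_def[symmetric] drift[symmetric]
    using stripe_eigenproblem.eigenvalue_iff_below[OF problem]
      stripe_eigenproblem.eigenvalue_on_critical_line[OF problem]
      stripe_eigenproblem.eigenvalue_iff_above[OF problem]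
      eigenfunctions_proportional_any_drift[OF assms(1,3,4,5)]
      eigenfunction_bounded_any_drift[OF assms(1,3,4,5)]
    by blast
qed

end
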